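(* In the setting of the context, \[ \lim_{u\to u_\infty+0}\psi(u)=0,\qquad \lim_{u\to u_\infty+0}\Bigl(\tilde E e^{-\delta\varphi(u)}+\tilde S e^{(\beta/\gamma)\tilde R}e^{-\delta\varphi(u)}\int_u^{u_0}e^{\delta\varphi(v)}dv\Bigr)=0 . \]
   Context: Let $\beta,\gamma,\delta>0$ be constants and $\tilde S,\tilde E,\tilde I,\tilde R$ real numbers with $N:=\tilde S+\tilde E+\tilde I+\tilde R>0$. Standing assumptions: (A1) $\tilde I>0$; (A2) $\tilde E>(\gamma/\delta)\tilde I$; (A3) $\tilde S>\delta\tilde E/(\beta\tilde I)$; (A4) $\tilde R\ge 0$ and $N>\tilde S e^{(\beta/\gamma)\tilde R}+\tilde R$. Let $\alpha$ be the unique solution in $(\tilde R,N)$ of $x=N-\tilde S e^{(\beta/\gamma)\tilde R}e^{-(\beta/\gamma)x}$, and assume (A5) $\tilde S<(\gamma/\beta)e^{(\beta/\gamma)(\alpha-\tilde R)}$. Put $u_0:=e^{-(\beta/\gamma)\tilde R}$, $u_\infty:=e^{-(\beta/\gamma)\alpha}$. Let $\psi$ be the unique function, continuous and positive on $(u_\infty,u_0]$ and $C^1$ on $(u_\infty,u_0)$, satisfying $\psi'(u)\psi(u)-\frac{\gamma+\delta}{u}\psi(u)=-\delta\,\frac{\beta N-\beta\tilde S e^{(\beta/\gamma)\tilde R}u+\gamma\log u}{u}$ on $(u_\infty,u_0)$ and $\psi(u_0)=\beta\tilde I$. Let $\varphi(u):=\int_u^{u_0}\frac{d\xi}{\xi\psi(\xi)}$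 for $u\in(u_\infty,u_0]$. *)

theory Defs
  imports "HOL-Analysis.Analysis"
begin

end

theory Submission
  imports Defs
begin

(* With K = S e^((beta/gamma) R) and F u = delta (beta N - beta K u + gamma ln u), the ODE reads
   u psi psi' = (gamma + delta) psi - F.  As phi' = -1/(u psi), the deviation y = F - delta psi
   solves the linear equation y' + delta phi' y = -delta beta K, and the integrating factor
   e^(delta phi) together with y(u0) = delta beta E gives
     y(u) = beta delta (E e^(-delta phi(u)) + K e^(-delta phi(u)) integral_u^u0 e^(delta phi)).
   So y is beta delta times the second quantity of the theorem; in particular y >= 0, i.e.
   0 < delta psi <= F.  The equation defining alpha says exactly F(u_inf) = 0, hence both psi
   and y tend to 0. *)

lemma integrating_factor_has_integral:
  fixes y y' P p q :: "real \<Rightarrow> real"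
  assumes "a \<le> b" and "continuous_on {a..b} y" "continuous_on {a..b} P"
    and y_deriv: "\<And>x. x \<in> {a<..<b} \<Longrightarrow> (y has_real_derivative y' x) (at x)"
    and P_deriv: "\<And>x. x \<in> {a<..<b} \<Longrightarrow> (P has_real_derivative p x) (at x)"
    and linear_ode: "\<And>x. x \<in> {a<..<b} \<Longrightarrow> y' x + p x * y x = q x"
  shows "((\<lambda>x. q x * exp (P x)) has_integral y b * exp (P b) - y a * exp (P a)) {a..b}"
proof (rule fundamental_theorem_of_calculus_interior)
  show "continuous_on {a..b} (\<lambda>x. y x * exp (P x))"
    using assms(2,3) by (intro continuous_intros)
  fix x assume x: "x \<in> {a<..<b}"
  have "((\<lambda>x. y x * exp (P x)) has_real_derivative (y' x + p x * y x) * exp (P x)) (at x)"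
    using y_deriv[OF x] P_deriv[OF x]
    by (auto intro!: derivative_eq_intros simp: algebra_simps)
  then show "((\<lambda>x. y x * exp (P x)) has_vector_derivative q x * exp (P x)) (at x)"
    by (simp add: linear_ode[OF x] has_real_derivative_iff_has_vector_derivative)
qed (use assms in auto)

lemma deviation_eq_weighted_integral:
  fixes \<psi> \<psi>' F \<phi> :: "real \<Rightarrow> real" and a b c \<gamma> \<delta> u :: real
  assumes "0 \<le> a" "u \<in> {a<..b}"
    and psi_cont: "continuous_on {a<..b} \<psi>"
    and psi_pos: "\<And>x. x \<in> {a<..b} \<Longrightarrow> \<psi> x > 0"
    and psi_deriv: "\<And>x. x \<in> {a<..<b} \<Longrightarrow> (\<psi> has_real_derivative \<psi>' x) (at x)"
    and F_cont: "continuous_on {a<..b} F"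
    and F_deriv: "\<And>x. x \<in> {a<..<b} \<Longrightarrow> (F has_real_derivative \<delta> * \<gamma> / x - c) (at x)"
    and ode: "\<And>x. x \<in> {a<..<b} \<Longrightarrow> \<psi>' x * \<psi> x - (\<gamma> + \<delta>) / x * \<psi> x = - F x / x"
    and phi: "\<And>x. x \<in> {a<..b} \<Longrightarrow> \<phi> x = integral {x..b} (\<lambda>\<xi>. 1 / (\<xi> * \<psi> \<xi>))"
  shows "F u - \<delta> * \<psi> u
    = exp (- \<delta> * \<phi> u) * (F b - \<delta> * \<psi> b + c * integral {u..b} (\<lambda>v. exp (\<delta> * \<phi> v)))"
proof -
  define h where "h = (\<lambda>\<xi>. 1 / (\<xi> * \<psi> \<xi>))"
  define \<Phi> where "\<Phi> = (\<lambda>x. integral {x..b} h)"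
  have au: "a < u" and ub: "u \<le> b" and sub: "{u..b} \<subseteq> {a<..b}" using assms(2) by auto
  have "continuous_on {u..b} h"
    unfolding h_def using sub psi_pos assms(1)
    by (intro continuous_intros continuous_on_subset[OF psi_cont sub]) force
  then have Phi_cont: "continuous_on {u..b} \<Phi>"
    and Phi_deriv: "\<And>x. x \<in> {u<..<b} \<Longrightarrow> (\<Phi> has_real_derivative - h x) (at x)"
    unfolding \<Phi>_def
    using integral_has_real_derivative'
    by (auto intro: indefinite_integral_continuous_1' integrable_continuous_interval
             simp: at_within_Icc_at[symmetric])
  have "((\<lambda>x. - c * exp (\<delta> * \<Phi> x)) has_integral
      (F b - \<delta> * \<psi> b) * exp (\<delta> * \<Phi> b) - (F u - \<delta> * \<psi> u) * exp (\<delta> * \<Phi> u)) {u..b}"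
  proof (rule integrating_factor_has_integral)
    show "continuous_on {u..b} (\<lambda>x. F x - \<delta> * \<psi> x)"
      by (intro continuous_intros continuous_on_subset[OF psi_cont sub]
          continuous_on_subset[OF F_cont sub])
    fix x assume x: "x \<in> {u<..<b}"
    then have x': "x \<in> {a<..<b}" and "x > 0" "\<psi> x > 0" using au assms(1) psi_pos by auto
    show "((\<lambda>x. F x - \<delta> * \<psi> x) has_real_derivative \<delta> * \<gamma> / x - c - \<delta> * \<psi>' x) (at x)"
      using F_deriv[OF x'] psi_deriv[OF x'] by (auto intro!: derivative_eq_intros)
    show "((\<lambda>x. \<delta> * \<Phi> x) has_real_derivative \<delta> * - h x) (at x)"
      using Phi_deriv[OF x] by (auto intro!: derivative_eq_intros)
    show "\<delta> * \<gamma> / x - c - \<delta> * \<psi>' x + \<delta> * - h x * (F x - \<delta> * \<psi> x) = - c"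
      using ode[OF x'] \<open>x > 0\<close> \<open>\<psi> x > 0\<close> unfolding h_def by (simp add: field_simps) algebra
  qed (use ub Phi_cont in \<open>auto intro: continuous_intros\<close>)
  moreover have "\<Phi> b = 0" "\<phi> u = \<Phi> u"
    using phi assms(2) unfolding \<Phi>_def h_def by auto
  moreover have "integral {u..b} (\<lambda>v. exp (\<delta> * \<phi> v)) = integral {u..b} (\<lambda>v. exp (\<delta> * \<Phi> v))"
    using phi sub unfolding \<Phi>_def h_def by (intro integral_cong) auto
  ultimately show ?thesis
    by (auto dest!: integral_unique simp: exp_minus field_simps)
qed

lemma integral_nonneg_unconditional:
  fixes f :: "'n::euclidean_space \<Rightarrow> real"
  assumes "\<And>x. x \<in> S \<Longrightarrow> 0 \<le> f x"
  shows "0 \<le> integral S f"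
  using assms by (cases "f integrable_on S") (auto intro: integral_nonneg simp: not_integrable_integral)

lemma tendsto_zero_if_nonneg_deviation:
  fixes \<psi> F X :: "'a \<Rightarrow> real"
  assumes F_lim: "(F \<longlongrightarrow> 0) L" and "\<delta> > 0" "c > 0"
    and "\<forall>\<^sub>F u in L. 0 \<le> \<psi> u \<and> 0 \<le> X u \<and> F u - \<delta> * \<psi> u = c * X u"
  shows "(\<psi> \<longlongrightarrow> 0) L" "(X \<longlongrightarrow> 0) L"
proof -
  show psi_lim: "(\<psi> \<longlongrightarrow> 0) L"
  proof (rule tendsto_sandwich[of "\<lambda>_. 0" _ _ "\<lambda>u. F u / \<delta>"])
    show "\<forall>\<^sub>F u in L. 0 \<le> \<psi> u" "\<forall>\<^sub>F u in L. \<psi> u \<le> F u / \<delta>"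
      using assms(2-4) by (auto elim!: eventually_mono simp: field_simps)
    show "((\<lambda>u. F u / \<delta>) \<longlongrightarrow> 0) L"
      using F_lim by (rule tendsto_divide_zero)
  qed simp
  have "((\<lambda>u. (F u - \<delta> * \<psi> u) / c) \<longlongrightarrow> 0) L"
    using tendsto_diff[OF F_lim tendsto_mult_right_zero[OF psi_lim, of \<delta>]]
    by (intro tendsto_divide_zero) simp
  then show "(X \<longlongrightarrow> 0) L"
    by (rule Lim_transform_eventually) (use assms(3,4) in \<open>auto elim: eventually_mono\<close>)
qed

theorem proposition2:
  fixes \<beta> \<gamma> \<delta> S E I R N \<alpha> u0 uinf :: real
    and \<psi> \<psi>' \<phi> :: "real \<Rightarrow> real"
  assumes pos: "\<beta> > 0" "\<gamma> > 0" "\<delta> > 0"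
    and N_def: "N = S + E + I + R"
    and N_pos: "N > 0"
    and A1: "I > 0"
    and A2: "E > (\<gamma> / \<delta>) * I"
    and A3: "S > \<delta> * E / (\<beta> * I)"
    and A4: "R \<ge> 0" "N > S * exp ((\<beta> / \<gamma>) * R) + R"
    and alpha_mem: "\<alpha> \<in> {R<..<N}"
    and alpha_eq: "\<alpha> = N - S * exp ((\<beta> / \<gamma>) * R) * exp (- (\<beta> / \<gamma>) * \<alpha>)"
    and alpha_uniq: "\<forall>x\<in>{R<..<N}. x = N - S * exp ((\<beta> / \<gamma>) * R) * exp (- (\<beta> / \<gamma>) * x) \<longrightarrow> x = \<alpha>"
    and A5: "S < (\<gamma> / \<beta>) * exp ((\<beta> / \<gamma>) * (\<alpha> - R))"
    and u0_def: "u0 = exp (- (\<beta> / \<gamma>) * R)"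
    and uinf_def: "uinf = exp (- (\<beta> / \<gamma>) * \<alpha>)"
    and psi_cont: "continuous_on {uinf<..u0} \<psi>"
    and psi_pos: "\<forall>u\<in>{uinf<..u0}. \<psi> u > 0"
    and psi_deriv: "\<forall>u\<in>{uinf<..<u0}. (\<psi> has_real_derivative \<psi>' u) (at u)"
    and psi'_cont: "continuous_on {uinf<..<u0} \<psi>'"
    and psi_ode: "\<forall>u\<in>{uinf<..<u0}. \<psi>' u * \<psi> u - (\<gamma> + \<delta>) / u * \<psi> u
        = - \<delta> * (\<beta> * N - \<beta> * S * exp ((\<beta> / \<gamma>) * R) * u + \<gamma> * ln u) / u"
    and psi_init: "\<psi> u0 = \<beta> * I"
    and phi_def: "\<forall>u\<in>{uinf<..u0}. \<phi> u = integral {u..u0} (\<lambda>\<xi>. 1 / (\<xi> * \<psi> \<xi>))"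
  shows "(\<psi> \<longlongrightarrow> 0) (at_right uinf) \<and>
     ((\<lambda>u. E * exp (- \<delta> * \<phi> u)
              + S * exp ((\<beta> / \<gamma>) * R) * exp (- \<delta> * \<phi> u)
                * integral {u..u0} (\<lambda>v. exp (\<delta> * \<phi> v))) \<longlongrightarrow> 0) (at_right uinf)"
proof -
  define K where "K = S * exp ((\<beta> / \<gamma>) * R)"
  define F where "F = (\<lambda>u::real. \<delta> * (\<beta> * N - \<beta> * K * u + \<gamma> * ln u))"
  define X where "X = (\<lambda>u. E * exp (- \<delta> * \<phi> u) + K * exp (- \<delta> * \<phi> u)
                             * integral {u..u0} (\<lambda>v. exp (\<delta> * \<phi> v)))"
  have "E > 0" using A1 A2 pos by (smt (verit) divide_pos_pos mult_pos_pos)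
  then have "S > 0" using A1 A3 pos by (smt (verit) divide_pos_pos mult_pos_pos)
  have "0 < uinf" "uinf < u0"
    using alpha_mem pos unfolding uinf_def u0_def by (auto simp: divide_simps)
  have "K * uinf = N - \<alpha>" "\<gamma> * ln uinf = - \<beta> * \<alpha>"
    using alpha_eq pos unfolding K_def uinf_def by simp_all
  then have "F uinf = 0"
    unfolding F_def by algebra
  moreover have "isCont F uinf"
    using \<open>0 < uinf\<close> unfolding F_def by (auto intro!: continuous_intros)
  ultimately have F_lim: "(F \<longlongrightarrow> 0) (at_right uinf)"
    by (metis isCont_def filterlim_at_split)
  have deviation: "F u - \<delta> * \<psi> u = \<beta> * \<delta> * X u" if "u \<in> {uinf<..<u0}" for u
  proof -
    have "F u - \<delta> * \<psi> u = exp (- \<delta> * \<phi> u)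
        * (F u0 - \<delta> * \<psi> u0 + \<delta> * \<beta> * K * integral {u..u0} (\<lambda>v. exp (\<delta> * \<phi> v)))"
    proof (rule deviation_eq_weighted_integral[where a = uinf and \<gamma> = \<gamma>])
      show "continuous_on {uinf<..u0} F"
        using \<open>0 < uinf\<close> unfolding F_def by (auto intro!: continuous_intros)
      show "(F has_real_derivative \<delta> * \<gamma> / x - \<delta> * \<beta> * K) (at x)" if "x \<in> {uinf<..<u0}" for x
        using that \<open>0 < uinf\<close> unfolding F_def
        by (auto intro!: derivative_eq_intros simp: field_simps)
      show "\<psi>' x * \<psi> x - (\<gamma> + \<delta>) / x * \<psi> x = - F x / x" if "x \<in> {uinf<..<u0}" for x
        using psi_ode that unfolding F_def K_def by auto
    qed (use that \<open>0 < uinf\<close> psi_cont psi_pos psi_deriv phi_def in auto)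
    moreover have "F u0 = \<delta> * \<beta> * (E + I)"
      using pos unfolding F_def K_def u0_def N_def by (simp add: algebra_simps flip: exp_add)
    ultimately show ?thesis
      unfolding psi_init X_def by (simp add: algebra_simps)
  qed
  have "X u \<ge> 0" for u
    unfolding X_def K_def using \<open>E > 0\<close> \<open>S > 0\<close> by (simp add: integral_nonneg_unconditional)
  moreover have "\<forall>\<^sub>F u in at_right uinf. u \<in> {uinf<..<u0}"
    using eventually_at_right_real[OF \<open>uinf < u0\<close>] .
  ultimately have "\<forall>\<^sub>F u in at_right uinf. 0 \<le> \<psi> u \<and> 0 \<le> X u \<and> F u - \<delta> * \<psi> u = \<beta> * \<delta> * X u"
    by (auto elim!: eventually_mono simp: deviation less_imp_le psi_pos)
  with F_lim pos show ?thesis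
    using tendsto_zero_if_nonneg_deviation[of F "at_right uinf" \<delta> "\<beta> * \<delta>" \<psi> X]
    unfolding X_def K_def by simp
qed

end
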